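(* For every odd integer $n\ge 3$ and every positive divisor $\lambda$ of $n$, there exists a ${}^\lambda\mathrm{H}_{n/\lambda}(n;3)$.
   Context: For positive integers $m,n,s,k,\lambda,t$ with $t$ dividing $\frac{2nk}{\lambda}$, let $v=\frac{2nk}{\lambda}+t$ and $J$ the subgroup of $\mathbb{Z}_v$ of order $t$. A ${}^\lambda\mathrm{H}_t(m,n;s,k)$ is an $m\times n$ partially filled array with entries in $\mathbb{Z}_v$ such that: (a) each row has exactly $s$ and each column exactly $k$ filled cells; (b) the multiset $\{\pm x: x$ an entry of a filled cell$\}$ contains each element of $\mathbb{Z}_v\setminus J$ exactly $\lambda$ times and no element of $J$; (c) every row and every column sums to $0$ in $\mathbb{Z}_v$. When $m=n$ (so $s=k$) it is denoted ${}^\lambda\mathrm{H}_t(n;k)$. *)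

theory Defs
  imports Main "HOL-Library.Multiset"
begin

text \<open>Elements of Z_v are represented by integers in {0..<v}; the subgroup J of order t
  is the set of multiples of v div t.\<close>

definition filled_cells :: "nat \<Rightarrow> nat \<Rightarrow> (nat \<Rightarrow> nat \<Rightarrow> int option) \<Rightarrow> (nat \<times> nat) set" where
  "filled_cells m n A = {(i, j). i < m \<and> j < n \<and> A i j \<noteq> None}"

definition pm_multiset :: "int \<Rightarrow> nat \<Rightarrow> nat \<Rightarrow> (nat \<Rightarrow> nat \<Rightarrow> int option) \<Rightarrow> int multiset" where
  "pm_multiset v m n A =
     image_mset (\<lambda>(i, j). the (A i j) mod v) (mset_set (filled_cells m n A)) +
     image_mset (\<lambda>(i, j). (- the (A i j)) mod v) (mset_set (filled_cells m n A))"

definition heffter_array ::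
  "nat \<Rightarrow> nat \<Rightarrow> nat \<Rightarrow> nat \<Rightarrow> nat \<Rightarrow> nat \<Rightarrow> (nat \<Rightarrow> nat \<Rightarrow> int option) \<Rightarrow> bool" where
  "heffter_array lam t m n s k A \<longleftrightarrow>
     (let v = 2 * n * k div lam + t in
       0 < m \<and> 0 < n \<and> 0 < s \<and> 0 < k \<and> 0 < lam \<and> 0 < t \<and>
       lam dvd 2 * n * k \<and> t dvd (2 * n * k div lam) \<and>
       (\<forall>i j. A i j \<noteq> None \<longrightarrow> i < m \<and> j < n) \<and>
       (\<forall>i j x. A i j = Some x \<longrightarrow> 0 \<le> x \<and> x < int v) \<and>
       (\<forall>i<m. card {j. j < n \<and> A i j \<noteq> None} = s) \<and>
       (\<forall>j<n. card {i. i < m \<and> A i j \<noteq> None} = k) \<and>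
       (\<forall>x \<in> {0..<int v}.
          count (pm_multiset (int v) m n A) x =
            (if int (v div t) dvd x then 0 else lam)) \<and>
       (\<forall>i<m. (\<Sum>j \<in> {j. j < n \<and> A i j \<noteq> None}. the (A i j)) mod int v = 0) \<and>
       (\<forall>j<n. (\<Sum>i \<in> {i. i < m \<and> A i j \<noteq> None}. the (A i j)) mod int v = 0))"

end

theory Submission
  imports Defs "HOL-Number_Theory.Cong"
begin

text \<open>Write \<open>n = \<lambda>d\<close>, so that \<open>v = 7d\<close> and \<open>J = 7\<int>\<^sub>v\<close>. Row \<open>i\<close> of the array is filled
  cyclically in columns \<open>i, i+1, i+2\<close> with \<open>1 + 7i\<close>, \<open>2 - 14i\<close>, \<open>7i - 3\<close>. Each entry has
  the shape \<open>c\<^sub>k + 7 m\<^sub>k i\<close> with \<open>(c\<^sub>k) = (1, 2, -3)\<close> and \<open>(m\<^sub>k) = (1, -2, 1)\<close>; since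
  \<open>\<Sum> c\<^sub>k = \<Sum> m\<^sub>k = \<Sum> k m\<^sub>k = 0\<close>, every row and every column sums to \<open>0\<close> modulo \<open>7d\<close>
  (a column meets the rows \<open>j, j-1, j-2\<close>, and \<open>d\<close> divides \<open>n\<close>). The six values
  \<open>\<plusminus>c\<^sub>k\<close> are the six nonzero residues modulo \<open>7\<close>, and as \<open>m\<^sub>k\<close> is prime to the odd \<open>d\<close>,
  \<open>\<plusminus>(c\<^sub>k + 7 m\<^sub>k i)\<close> for \<open>i < \<lambda>d\<close> runs \<open>\<lambda>\<close> times through the residue class of \<open>\<plusminus>c\<^sub>k\<close>
  modulo \<open>7\<close> in \<open>\<int>\<^sub>7\<^sub>d\<close>.\<close>

lemma card_residue_class:
  fixes d lam r :: nat
  assumes "r < d"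
  shows "card {i. i < lam * d \<and> i mod d = r} = lam"
proof -
  have "{i. i < lam * d \<and> i mod d = r} = (\<lambda>k. r + d * k) ` {..<lam}"
  proof (intro set_eqI iffI)
    fix i assume "i \<in> {i. i < lam * d \<and> i mod d = r}"
    then have "i = r + d * (i div d)" "i div d < lam"
      by (auto simp: less_mult_imp_div_less mult.commute)
    then show "i \<in> (\<lambda>k. r + d * k) ` {..<lam}" by blast
  next
    fix i assume "i \<in> (\<lambda>k. r + d * k) ` {..<lam}"
    then obtain k where "k < lam" "i = r + d * k" by blast
    moreover have "r + d * k < d * Suc k" using assms by simp
    moreover have "d * Suc k \<le> d * lam" using \<open>k < lam\<close> by (intro mult_le_mono2) simp
    ultimately show "i \<in> {i. i < lam * d \<and> i mod d = r}"
      using assms by (simp add: mult.commute)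
  qed
  moreover have "inj_on (\<lambda>k. r + d * k) {..<lam}"
    using assms by (auto simp: inj_on_def)
  ultimately show ?thesis by (simp add: card_image)
qed

lemma card_affine_progression_mod:
  fixes d lam :: nat and q c m x :: int
  assumes "0 < q" "coprime m (int d)" "0 \<le> x" "x < q * int d"
  shows "card {i. i < lam * d \<and> (c + q * m * int i) mod (q * int d) = x} =
    (if x mod q = c mod q then lam else 0)"
proof (cases "x mod q = c mod q")
  case False
  have "(c + q * m * int i) mod (q * int d) \<noteq> x" for i
  proof
    assume "(c + q * m * int i) mod (q * int d) = x"
    then have "x mod q = (c + q * m * int i) mod (q * int d) mod q" by simp
    also have "\<dots> = c mod q" by (simp add: mod_mod_cancel mult.assoc)
    finally show False using False by simp
  qed
  then have "{i. i < lam * d \<and> (c + q * m * int i) mod (q * int d) = x} = {}" by blast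
  then show ?thesis using False by (simp only: card.empty if_False)
next
  case True
  then have "q dvd x - c" by (simp add: mod_eq_dvd_iff)
  then obtain y where "x - c = q * y" by (rule dvdE)
  then have y: "x = c + q * y" by simp
  obtain u where u: "[m * u = 1] (mod int d)"
    using cong_solve_coprime_int[OF assms(2)] by blast
  have "d > 0" using assms by (auto intro: ccontr)
  define r where "r = nat ((u * y) mod int d)"
  have r: "r < d" "int r = (u * y) mod int d"
    using \<open>d > 0\<close> by (auto simp: r_def nat_less_iff)
  have "(c + q * m * int i) mod (q * int d) = x \<longleftrightarrow> i mod d = r" for i
  proof -
    have "(c + q * m * int i) mod (q * int d) = x \<longleftrightarrow> [c + q * m * int i = x] (mod q * int d)"
      using assms(3,4) by (simp add: cong_def)
    also have "\<dots> \<longleftrightarrow> [q * (m * int i) = q * y] (mod q * int d)"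
      unfolding y by (simp only: cong_add_lcancel mult.assoc)
    also have "\<dots> \<longleftrightarrow> [m * int i = y] (mod int d)"
      using assms(1) by (simp add: cong_iff_dvd_diff flip: right_diff_distrib)
    also have "\<dots> \<longleftrightarrow> [m * int i = m * (u * y)] (mod int d)"
      using cong_scalar_right[OF u, of y] by (metis cong_sym cong_trans mult.assoc mult_1)
    also have "\<dots> \<longleftrightarrow> [int i = u * y] (mod int d)"
      using assms(2) by (rule cong_mult_lcancel)
    also have "\<dots> \<longleftrightarrow> i mod d = r"
      by (simp add: cong_def flip: of_nat_mod r(2))
    finally show ?thesis .
  qed
  then have "{i. i < lam * d \<and> (c + q * m * int i) mod (q * int d) = x} = {i. i < lam * d \<and> i mod d = r}"
    by blast
  then show ?thesis using True card_residue_class[OF r(1)] by simp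
qed

lemma count_image_mset_set_times:
  assumes "finite A" "finite B"
  shows "count (image_mset g (mset_set (A \<times> B))) x = (\<Sum>b\<in>B. card {a \<in> A. g (a, b) = x})"
proof -
  have "count (image_mset g (mset_set (A \<times> B))) x = card {p \<in> A \<times> B. g p = x}"
    using assms by (simp add: count_image_mset Int_commute vimage_def Collect_conj_eq)
  also have "{p \<in> A \<times> B. g p = x} = (\<lambda>(b, a). (a, b)) ` (SIGMA b:B. {a \<in> A. g (a, b) = x})"
    by auto
  also have "card \<dots> = card (SIGMA b:B. {a \<in> A. g (a, b) = x})"
    by (rule card_image) (auto intro: inj_onI)
  also have "\<dots> = (\<Sum>b\<in>B. card {a \<in> A. g (a, b) = x})"
    using assms by simp
  finally show ?thesis .
qed

lemma mod_diff_eq_iff_cong: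
  fixes a b c n :: nat
  assumes "b \<le> a" "c < n"
  shows "(a - b) mod n = c \<longleftrightarrow> [b + c = a] (mod n)"
proof -
  have "(a - b) mod n = c \<longleftrightarrow> [a - b = c] (mod n)"
    using assms(2) by (simp add: cong_def)
  also have "\<dots> \<longleftrightarrow> [a - b + b = c + b] (mod n)"
    by (simp only: cong_add_rcancel_nat)
  finally show ?thesis using assms(1) by (simp add: add.commute cong_sym_eq)
qed

lemma eq_mod_iff_cong:
  fixes a j n :: nat
  assumes "j < n"
  shows "j = a mod n \<longleftrightarrow> [a = j] (mod n)"
  using assms by (auto simp: cong_def)

lemma inj_on_add_mod: "inj_on (\<lambda>k. (i + k) mod n) {..<n::nat}"
proof (rule inj_onI)
  fix k k' assume "k \<in> {..<n}" "k' \<in> {..<n}" "(i + k) mod n = (i + k') mod n"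
  moreover have "[k = k'] (mod n)"
    using cong_add_lcancel_nat[of i k k' n] \<open>(i + k) mod n = (i + k') mod n\<close>
    by (simp add: cong_def)
  ultimately show "k = k'" by (simp add: cong_def)
qed

definition band_array :: "nat \<Rightarrow> nat \<Rightarrow> (nat \<Rightarrow> nat \<Rightarrow> int) \<Rightarrow> nat \<Rightarrow> nat \<Rightarrow> int option" where
  "band_array n s f i j =
     (if i < n \<and> j < n \<and> (j + n - i) mod n < s then Some (f i ((j + n - i) mod n)) else None)"

lemma band_array_nonempty_bounds:
  "band_array n s f i j \<noteq> None \<Longrightarrow> i < n \<and> j < n"
  by (simp add: band_array_def split: if_splits)

context
  fixes n s :: nat and f :: "nat \<Rightarrow> nat \<Rightarrow> int"
  assumes s_le_n: "s \<le> n"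
begin

lemma band_array_offset_iff:
  assumes "i < n" "j < n" "k < s"
  shows "(j + n - i) mod n = k \<longleftrightarrow> j = (i + k) mod n"
proof -
  have "(j + n - i) mod n = k \<longleftrightarrow> [i + k = j + n] (mod n)"
    using assms s_le_n by (simp add: mod_diff_eq_iff_cong)
  also have "\<dots> \<longleftrightarrow> [i + k = j] (mod n)"
    by (simp add: cong_def)
  also have "\<dots> \<longleftrightarrow> j = (i + k) mod n"
    using assms(2) by (simp add: eq_mod_iff_cong)
  finally show ?thesis .
qed

lemma band_array_row_index_iff:
  assumes "i < n" "j < n" "k < s"
  shows "j = (i + k) mod n \<longleftrightarrow> i = (j + n - k) mod n"
proof -
  have "j = (i + k) mod n \<longleftrightarrow> [k + i = j + n] (mod n)"
    using assms(2) by (simp add: eq_mod_iff_cong cong_def add.commute)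
  also have "\<dots> \<longleftrightarrow> (j + n - k) mod n = i"
    using assms s_le_n by (simp add: mod_diff_eq_iff_cong)
  finally show ?thesis by auto
qed

lemma band_array_nonemptyE:
  assumes "band_array n s f i j \<noteq> None"
  obtains k where "i < n" "k < s" "j = (i + k) mod n"
proof -
  have "i < n" "j < n" "(j + n - i) mod n < s"
    using assms by (auto simp: band_array_def split: if_splits)
  then show thesis using that band_array_offset_iff by blast
qed

lemma band_array_at:
  assumes "i < n" "k < s"
  shows "band_array n s f i ((i + k) mod n) = Some (f i k)"
proof -
  have "((i + k) mod n + n - i) mod n = k"
    using assms s_le_n band_array_offset_iff[of i "(i + k) mod n" k] by simp
  then show ?thesis using assms s_le_n by (simp add: band_array_def)
qed

lemma band_array_row:
  assumes "i < n"
  shows "{j. j < n \<and> band_array n s f i j \<noteq> None} = (\<lambda>k. (i + k) mod n) ` {..<s}"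
proof (intro set_eqI iffI)
  fix j assume "j \<in> {j. j < n \<and> band_array n s f i j \<noteq> None}"
  then have "band_array n s f i j \<noteq> None" by simp
  then obtain k where "k < s" "j = (i + k) mod n" by (rule band_array_nonemptyE)
  then show "j \<in> (\<lambda>k. (i + k) mod n) ` {..<s}" by blast
next
  fix j assume "j \<in> (\<lambda>k. (i + k) mod n) ` {..<s}"
  then obtain k where "k < s" "j = (i + k) mod n" by blast
  moreover have "j < n" using assms \<open>j = (i + k) mod n\<close> by simp
  ultimately show "j \<in> {j. j < n \<and> band_array n s f i j \<noteq> None}"
    using assms band_array_at by auto
qed

lemma band_array_column:
  assumes "j < n"
  shows "{i. i < n \<and> band_array n s f i j \<noteq> None} = (\<lambda>k. (j + n - k) mod n) ` {..<s}"
proof (intro set_eqI iffI)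
  fix i assume "i \<in> {i. i < n \<and> band_array n s f i j \<noteq> None}"
  then have i: "i < n" and filled: "band_array n s f i j \<noteq> None" by simp_all
  from filled obtain k where k: "k < s" "j = (i + k) mod n" by (rule band_array_nonemptyE)
  then have "i = (j + n - k) mod n"
    using band_array_row_index_iff[OF i assms k(1)] by blast
  then show "i \<in> (\<lambda>k. (j + n - k) mod n) ` {..<s}"
    using k(1) by blast
next
  fix i assume "i \<in> (\<lambda>k. (j + n - k) mod n) ` {..<s}"
  then obtain k where k: "k < s" "i = (j + n - k) mod n" by blast
  then have i: "i < n" using assms by simp
  then have "j = (i + k) mod n"
    using band_array_row_index_iff[OF i assms k(1)] k(2) by blast
  then show "i \<in> {i. i < n \<and> band_array n s f i j \<noteq> None}"
    using i k(1) band_array_at by auto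
qed

lemma inj_on_band_array_row: "inj_on (\<lambda>k. (i + k) mod n) {..<s}"
  by (rule inj_on_subset[OF inj_on_add_mod]) (use s_le_n in auto)

lemma inj_on_band_array_column:
  assumes "j < n"
  shows "inj_on (\<lambda>k. (j + n - k) mod n) {..<s}"
proof (rule inj_onI)
  fix k k' assume k: "k \<in> {..<s}" "k' \<in> {..<s}" "(j + n - k) mod n = (j + n - k') mod n"
  define r where "r = (j + n - k) mod n"
  have "r < n" using assms by (simp add: r_def)
  then have "j = (r + k) mod n" "j = (r + k') mod n"
    using assms k band_array_row_index_iff unfolding r_def by auto
  then show "k = k'"
    using inj_onD[OF inj_on_band_array_row, of r k k'] k(1,2) by simp
qed

lemma band_array_at_column:
  assumes "j < n" "k < s"
  shows "band_array n s f ((j + n - k) mod n) j = Some (f ((j + n - k) mod n) k)"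
proof -
  define i where "i = (j + n - k) mod n"
  have i: "i < n" using assms by (simp add: i_def)
  then have "j = (i + k) mod n"
    using band_array_row_index_iff[OF i assms(1,2)] by (simp add: i_def)
  then show ?thesis using band_array_at[OF i assms(2)] by (simp add: i_def)
qed

lemma band_array_row_card:
  assumes "i < n"
  shows "card {j. j < n \<and> band_array n s f i j \<noteq> None} = s"
  unfolding band_array_row[OF assms] using card_image[OF inj_on_band_array_row] by simp

lemma band_array_column_card:
  assumes "j < n"
  shows "card {i. i < n \<and> band_array n s f i j \<noteq> None} = s"
  unfolding band_array_column[OF assms] using card_image[OF inj_on_band_array_column[OF assms]]
  by simp

lemma band_array_row_sum:
  assumes "i < n"
  shows "(\<Sum>j \<in> {j. j < n \<and> band_array n s f i j \<noteq> None}. the (band_array n s f i j)) = (\<Sum>k<s. f i k)"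
  unfolding band_array_row[OF assms]
proof (rule sum.reindex_cong[OF inj_on_band_array_row])
  fix k assume "k \<in> {..<s}"
  then show "the (band_array n s f i ((i + k) mod n)) = f i k"
    using band_array_at[OF assms, of k] by simp
qed simp

lemma band_array_column_sum:
  assumes "j < n"
  shows "(\<Sum>i \<in> {i. i < n \<and> band_array n s f i j \<noteq> None}. the (band_array n s f i j)) =
    (\<Sum>k<s. f ((j + n - k) mod n) k)"
  unfolding band_array_column[OF assms]
  by (rule sum.reindex_cong[OF inj_on_band_array_column[OF assms]]) (simp_all add: band_array_at_column[OF assms])

lemma band_array_filled_cells:
  "filled_cells n n (band_array n s f) = (\<lambda>(i, k). (i, (i + k) mod n)) ` ({..<n} \<times> {..<s})"
proof
  show "filled_cells n n (band_array n s f) \<subseteq> (\<lambda>(i, k). (i, (i + k) mod n)) ` ({..<n} \<times> {..<s})"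
  proof
    fix p assume "p \<in> filled_cells n n (band_array n s f)"
    then obtain i j where p: "p = (i, j)" and filled: "band_array n s f i j \<noteq> None"
      unfolding filled_cells_def by blast
    from filled obtain k where "i < n" "k < s" "j = (i + k) mod n" by (rule band_array_nonemptyE)
    then have "(i, k) \<in> {..<n} \<times> {..<s}" "p = (\<lambda>(i, k). (i, (i + k) mod n)) (i, k)"
      using p by simp_all
    then show "p \<in> (\<lambda>(i, k). (i, (i + k) mod n)) ` ({..<n} \<times> {..<s})"
      by (rule rev_image_eqI)
  qed
  show "(\<lambda>(i, k). (i, (i + k) mod n)) ` ({..<n} \<times> {..<s}) \<subseteq> filled_cells n n (band_array n s f)"
  proof (rule image_subsetI)
    fix p assume "p \<in> {..<n} \<times> {..<s}"
    then obtain i k where "p = (i, k)" "i < n" "k < s" by blast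
    moreover from this have "0 < n" by simp
    ultimately show "(\<lambda>(i, k). (i, (i + k) mod n)) p \<in> filled_cells n n (band_array n s f)"
      by (simp add: filled_cells_def band_array_at)
  qed
qed

lemma inj_on_band_array_cells:
  "inj_on (\<lambda>(i, k). (i, (i + k) mod n)) ({..<n} \<times> {..<s})"
  using inj_onD[OF inj_on_band_array_row] by (auto intro!: inj_onI)

lemma pm_multiset_band_array:
  "pm_multiset v n n (band_array n s f) =
     image_mset (\<lambda>(i, k). f i k mod v) (mset_set ({..<n} \<times> {..<s})) +
     image_mset (\<lambda>(i, k). (- f i k) mod v) (mset_set ({..<n} \<times> {..<s}))"
proof -
  have cells: "mset_set (filled_cells n n (band_array n s f)) =
      image_mset (\<lambda>(i, k). (i, (i + k) mod n)) (mset_set ({..<n} \<times> {..<s}))"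
    unfolding band_array_filled_cells
    by (rule image_mset_mset_set[OF inj_on_band_array_cells, symmetric])
  show ?thesis
    unfolding pm_multiset_def cells image_mset.compositionality
    by (intro arg_cong2[where f = "(+)"] image_mset_cong) (auto simp: band_array_at)
qed

end

lemma int_cyclic_diff_cong:
  fixes j k n :: nat
  assumes "k \<le> n"
  shows "[int ((j + n - k) mod n) = int j - int k] (mod int n)"
proof -
  have "int ((j + n - k) mod n) = int (j + n - k) mod int n"
    by (simp only: of_nat_mod)
  also have "int (j + n - k) = (int j - int k) + int n"
    using assms by simp
  finally show ?thesis by (simp add: cong_def)
qed

definition entry_const :: "nat \<Rightarrow> int" where
  "entry_const k = (if k = 0 then 1 else if k = 1 then 2 else -3)"

definition entry_slope :: "nat \<Rightarrow> int" where
  "entry_slope k = (if k = 1 then -2 else 1)"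

definition heffter_entry :: "nat \<Rightarrow> int \<Rightarrow> int" where
  "heffter_entry k x = entry_const k + 7 * entry_slope k * x"

definition heffter_band :: "nat \<Rightarrow> nat \<Rightarrow> nat \<Rightarrow> nat \<Rightarrow> int option" where
  "heffter_band n d = band_array n 3 (\<lambda>i k. heffter_entry k (int i) mod (7 * int d))"

lemma sum_heffter_entry_row: "(\<Sum>k<3. heffter_entry k x) = 0"
  by (simp add: heffter_entry_def entry_const_def entry_slope_def eval_nat_numeral)

lemma sum_heffter_entry_column: "(\<Sum>k<3. heffter_entry k (x - int k)) = 0"
  by (simp add: heffter_entry_def entry_const_def entry_slope_def eval_nat_numeral)

lemma heffter_entry_cong:
  assumes "[x = y] (mod m)"
  shows "[heffter_entry k x = heffter_entry k y] (mod 7 * m)"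
proof -
  obtain t where "x - y = m * t" using assms by (auto simp: cong_iff_dvd_diff elim: dvdE)
  then have "heffter_entry k x - heffter_entry k y = 7 * m * (entry_slope k * t)"
    by (simp add: heffter_entry_def algebra_simps flip: right_diff_distrib)
  then show ?thesis by (simp add: cong_iff_dvd_diff)
qed

lemma coprime_entry_slope: "odd d \<Longrightarrow> coprime (entry_slope k) (int d)"
  by (simp add: entry_slope_def)

lemma heffter_band_range:
  assumes "0 < d" "heffter_band n d i j = Some x"
  shows "0 \<le> x \<and> x < 7 * int d"
  using assms by (auto simp: heffter_band_def band_array_def split: if_splits)

lemma heffter_band_row_sum:
  assumes "3 \<le> n" "i < n"
  shows "(\<Sum>j \<in> {j. j < n \<and> heffter_band n d i j \<noteq> None}. the (heffter_band n d i j)) mod (7 * int d) = 0"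
  unfolding heffter_band_def band_array_row_sum[OF assms]
  by (simp add: mod_sum_eq sum_heffter_entry_row)

lemma heffter_band_column_sum:
  assumes "3 \<le> n" "d dvd n" "j < n"
  shows "(\<Sum>i \<in> {i. i < n \<and> heffter_band n d i j \<noteq> None}. the (heffter_band n d i j)) mod (7 * int d) = 0"
proof -
  have "[(\<Sum>k<3. heffter_entry k (int ((j + n - k) mod n))) = (\<Sum>k<3. heffter_entry k (int j - int k))]
      (mod 7 * int d)"
  proof (rule cong_sum, rule heffter_entry_cong)
    fix k :: nat assume "k \<in> {..<3}"
    then show "[int ((j + n - k) mod n) = int j - int k] (mod int d)"
      using assms by (intro cong_dvd_modulus[OF int_cyclic_diff_cong]) auto
  qed
  then show ?thesis
    unfolding heffter_band_def band_array_column_sum[OF assms(1,3)]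
    by (simp add: mod_sum_eq sum_heffter_entry_column cong_def)
qed

lemma count_heffter_band:
  assumes n: "n = lam * d" and "odd d" "3 \<le> n" "0 \<le> x" "x < 7 * int d"
  shows "count (pm_multiset (7 * int d) n n (heffter_band n d)) x = (if 7 dvd x then 0 else lam)"
proof -
  let ?v = "7 * int d"
  have card_entries: "card {i. i < lam * d \<and> (\<sigma> * heffter_entry k (int i)) mod ?v = x} =
      (if x mod 7 = (\<sigma> * entry_const k) mod 7 then lam else 0)" if "\<sigma> = 1 \<or> \<sigma> = -1" for \<sigma> k
  proof -
    have "coprime (\<sigma> * entry_slope k) (int d)"
      using that coprime_entry_slope[OF \<open>odd d\<close>] by auto
    then have "card {i. i < lam * d \<and> (\<sigma> * entry_const k + 7 * (\<sigma> * entry_slope k) * int i) mod ?v = x} =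
        (if x mod 7 = (\<sigma> * entry_const k) mod 7 then lam else 0)"
      using assms by (intro card_affine_progression_mod) auto
    then show ?thesis by (simp add: heffter_entry_def algebra_simps)
  qed
  have "count (pm_multiset ?v n n (heffter_band n d)) x =
      (\<Sum>k<3. card {i. i < lam * d \<and> (1 * heffter_entry k (int i)) mod ?v = x}) +
      (\<Sum>k<3. card {i. i < lam * d \<and> (- 1 * heffter_entry k (int i)) mod ?v = x})"
    unfolding heffter_band_def pm_multiset_band_array[OF \<open>3 \<le> n\<close>]
    by (simp add: count_image_mset_set_times mod_minus_eq n)
  also have "\<dots> = (\<Sum>k<3. if x mod 7 = entry_const k mod 7 then lam else 0) +
      (\<Sum>k<3. if x mod 7 = (- entry_const k) mod 7 then lam else 0)"
    using card_entries[of 1] card_entries[of "- 1"] by simp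
  also have "\<dots> = (if 7 dvd x then 0 else lam)"
  proof -
    have "x mod 7 \<in> {0, 1, 2, 3, 4, 5, 6}" by auto
    then show ?thesis
      by (auto simp: entry_const_def eval_nat_numeral dvd_eq_mod_eq_0)
  qed
  finally show ?thesis .
qed

theorem proposition4:
  fixes n lam :: nat
  assumes "odd n" and "n \<ge> 3" and "0 < lam" and "lam dvd n"
  shows "\<exists>A. heffter_array lam (n div lam) n n 3 3 A"
proof -
  obtain d where n: "n = lam * d" using assms(4) by (rule dvdE)
  have "odd d" "d dvd n" using assms(1) n by auto
  then have "0 < d" by (simp add: odd_pos)
  have v: "2 * n * 3 div lam + n div lam = 7 * d" "n div lam = d" "7 * d div d = 7"
    using n assms(3) \<open>0 < d\<close> by simp_all
  have "heffter_array lam (n div lam) n n 3 3 (heffter_band n d)"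
    unfolding heffter_array_def Let_def v
    using assms(2,3) \<open>0 < d\<close> n
      band_array_nonempty_bounds[of n 3 _ _ _] heffter_band_range[OF \<open>0 < d\<close>]
      band_array_row_card[OF assms(2)] band_array_column_card[OF assms(2)]
      count_heffter_band[OF n \<open>odd d\<close> assms(2)]
      heffter_band_row_sum[OF assms(2)] heffter_band_column_sum[OF assms(2) \<open>d dvd n\<close>]
    by (auto simp: heffter_band_def)
  then show ?thesis by blast
qed

end
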